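(* Let $\lambda=(\lambda_1,\lambda_2,\lambda_3)\in\mathbb C^3$ and let $\pi$ be a representation of $\mathrm U_q(\mathfrak{gl}_3)$ on a space $W$ generated by a vector $v_0$ with $q^{\nu G_i}v_0=q^{\nu\lambda_i}v_0$ for all $\nu\in\mathbb C$, $i=1,2,3$, and $E_1v_0=E_2v_0=0$. Then $C^{(1)},C^{(2)},C^{(3)}$ act on $W$ as scalars and, as polynomials in a formal variable $\zeta$, $$\pi\bigl(1-C^{(1)}\zeta-C^{(2)}\zeta^2-C^{(3)}\zeta^3\bigr)=(1-q^{-2(\lambda_1+1)}\zeta)(1-q^{-2\lambda_2}\zeta)(1-q^{-2(\lambda_3-1)}\zeta).$$ Consequently, if $F_k$ ($k\ge1$) are defined by $\sum_{k\ge1}F_k\zeta^k/k=-\log(1-C^{(1)}\zeta-C^{(2)}\zeta^2-C^{(3)}\zeta^3)$ and $F(\zeta)=\sum_{k\ge1}\frac{F_k}{q^{2k}+1+q^{-2k}}\frac{\zeta^k}{k}$ (assuming $q^{2k}+1+q^{-2k}\ne0$ for all $k\ge1$), then $\pi(F_k)=q^{-2(\lambda_1+1)k}+q^{-2\lambda_2k}+q^{-2(\lambda_3-1)k}$ and $$\pi(F(\zeta))=f_3(q^{-2(\lambda_1+1)}\zeta)+f_3(q^{-2\lambda_2}\zeta)+f_3(q^{-2(\lambda_3-1)}\zeta),\qquad f_3(\zeta)=\sum_{k\ge1}\frac{1}{q^{2k}+1+q^{-2k}}\frac{\zeta^k}{k}.$$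
   Context: Setting: $\hbar\in\mathbb C$, $q=e^\hbar$, $q^2\neq1$, $\kappa_q=q-q^{-1}$, $[\nu]_q=(q^\nu-q^{-\nu})/\kappa_q$. Let $\mathfrak g=\mathbb CG_1\oplus\mathbb CG_2\oplus\mathbb CG_3$ and define linear forms $\alpha_1,\alpha_2$ on $\mathfrak g$ by $\alpha_1(G_1)=1,\alpha_1(G_2)=-1,\alpha_1(G_3)=0$, $\alpha_2(G_1)=0,\alpha_2(G_2)=1,\alpha_2(G_3)=-1$; put $H_1=G_1-G_2$, $H_2=G_2-G_3$. $\mathrm U_q(\mathfrak{gl}_3)$ is the unital associative $\mathbb C$-algebra generated by $E_1,E_2,F_1,F_2$ and symbols $q^X$, $X\in\mathfrak g$, with relations $q^0=1$, $q^{X_1}q^{X_2}=q^{X_1+X_2}$, $q^XE_iq^{-X}=q^{\alpha_i(X)}E_i$, $q^XF_iq^{-X}=q^{-\alpha_i(X)}F_i$, $[E_i,F_j]=\delta_{ij}(q^{H_i}-q^{-H_i})/\kappa_q$, and for $i\ne j$ the $q$-Serre relations $E_i^2E_j-[2]_qE_iE_jE_i+E_jE_i^2=0$, $F_i^2F_j-[2]_qF_iF_jF_i+F_jF_i^2=0$. For $\nu\in\mathbb C$ one writes $q^{X+\nu}=q^\nu q^X$. Further $E_3=E_1E_2-q^{-1}E_2E_1$, $F_3=F_2F_1-qF_1F_2$, and $C^{(1)}=q^{-2G_1-2}+q^{-2G_2}+q^{-2G_3+2}+\kappa_q^2F_1E_1q^{-G_1-G_2-1}+\kappa_q^2F_2E_2q^{-G_2-G_3+1}+\kappa_q^2F_3E_3q^{-G_1-G_3+1}-\kappa_q^3F_3E_1E_2q^{-G_1-G_3}$,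 $C^{(2)}=-q^{-2G_1-2G_2-2}-q^{-2G_1-2G_3}-q^{-2G_2-2G_3+2}-\kappa_q^2F_1E_1q^{-G_1-G_2-2G_3+1}-\kappa_q^2F_2E_2q^{-2G_1-G_2-G_3-1}-\kappa_q^2F_3E_3q^{-G_1-2G_2-G_3+1}-\kappa_q^3F_1F_2E_3q^{-G_1-2G_2-G_3+1}$, $C^{(3)}=q^{-2(G_1+G_2+G_3)}$. *)

theory Defs
  imports Complex_Main "HOL-Computational_Algebra.Polynomial" "HOL-Computational_Algebra.Formal_Power_Series"
begin

text \<open>Conventions.  q^nu = exp (hbar * nu) for nu complex.  An element
  X = x1 G1 + x2 G2 + x3 G3 of the Cartan algebra g is encoded by its coordinates
  (x1, x2, x3); the operator K x1 x2 x3 is the image of the generator q^X.\<close>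

definition qp :: "complex \<Rightarrow> complex \<Rightarrow> complex" where
  "qp hbar nu = exp (hbar * nu)"

definition kappa :: "complex \<Rightarrow> complex" where
  "kappa hbar = qp hbar 1 - qp hbar (-1)"

definition qint :: "complex \<Rightarrow> complex \<Rightarrow> complex" where
  "qint hbar nu = (qp hbar nu - qp hbar (-nu)) / kappa hbar"

definition alpha :: "nat \<Rightarrow> complex \<Rightarrow> complex \<Rightarrow> complex \<Rightarrow> complex" where
  "alpha i x1 x2 x3 = (if i = 1 then x1 - x2 else x2 - x3)"

definition is_Uq_gl3_rep ::
  "complex \<Rightarrow> (complex \<Rightarrow> 'w::ab_group_add \<Rightarrow> 'w) \<Rightarrow> (nat \<Rightarrow> 'w \<Rightarrow> 'w) \<Rightarrow> (nat \<Rightarrow> 'w \<Rightarrow> 'w)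
    \<Rightarrow> (complex \<Rightarrow> complex \<Rightarrow> complex \<Rightarrow> 'w \<Rightarrow> 'w) \<Rightarrow> bool" where
  "is_Uq_gl3_rep hbar smul E F K \<longleftrightarrow>
     vector_space smul \<and>
     (\<forall>i\<in>{1,2}. Vector_Spaces.linear smul smul (E i) \<and> Vector_Spaces.linear smul smul (F i)) \<and>
     (\<forall>x1 x2 x3. Vector_Spaces.linear smul smul (K x1 x2 x3)) \<and>
     K 0 0 0 = id \<and>
     (\<forall>x1 x2 x3 y1 y2 y3. K x1 x2 x3 \<circ> K y1 y2 y3 = K (x1+y1) (x2+y2) (x3+y3)) \<and>
     (\<forall>i\<in>{1,2}. \<forall>x1 x2 x3 w.
        K x1 x2 x3 (E i (K (-x1) (-x2) (-x3) w)) = smul (qp hbar (alpha i x1 x2 x3)) (E i w)) \<and>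
     (\<forall>i\<in>{1,2}. \<forall>x1 x2 x3 w.
        K x1 x2 x3 (F i (K (-x1) (-x2) (-x3) w)) = smul (qp hbar (- alpha i x1 x2 x3)) (F i w)) \<and>
     (\<forall>w. E 1 (F 1 w) - F 1 (E 1 w) = smul (1 / kappa hbar) (K 1 (-1) 0 w - K (-1) 1 0 w)) \<and>
     (\<forall>w. E 2 (F 2 w) - F 2 (E 2 w) = smul (1 / kappa hbar) (K 0 1 (-1) w - K 0 (-1) 1 w)) \<and>
     (\<forall>w. E 1 (F 2 w) - F 2 (E 1 w) = 0) \<and>
     (\<forall>w. E 2 (F 1 w) - F 1 (E 2 w) = 0) \<and>
     (\<forall>i\<in>{1,2}. \<forall>j\<in>{1,2}. i \<noteq> j \<longrightarrow> (\<forall>w.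
        E i (E i (E j w)) - smul (qint hbar 2) (E i (E j (E i w))) + E j (E i (E i w)) = 0 \<and>
        F i (F i (F j w)) - smul (qint hbar 2) (F i (F j (F i w))) + F j (F i (F i w)) = 0))"

definition generated_by ::
  "(complex \<Rightarrow> 'w::ab_group_add \<Rightarrow> 'w) \<Rightarrow> (nat \<Rightarrow> 'w \<Rightarrow> 'w) \<Rightarrow> (nat \<Rightarrow> 'w \<Rightarrow> 'w)
    \<Rightarrow> (complex \<Rightarrow> complex \<Rightarrow> complex \<Rightarrow> 'w \<Rightarrow> 'w) \<Rightarrow> 'w \<Rightarrow> bool" where
  "generated_by smul E F K v0 \<longleftrightarrow>
     (\<forall>S. module.subspace smul S \<and> v0 \<in> S \<and>
          (\<forall>i\<in>{1,2}. E i ` S \<subseteq> S \<and> F i ` S \<subseteq> S) \<and>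
          (\<forall>x1 x2 x3. K x1 x2 x3 ` S \<subseteq> S) \<longrightarrow> S = UNIV)"

definition E3op where
  "E3op hbar smul E = (\<lambda>w. E 1 (E 2 w) - smul (qp hbar (-1)) (E 2 (E 1 w)))"

definition F3op where
  "F3op hbar smul F = (\<lambda>w. F 2 (F 1 w) - smul (qp hbar 1) (F 1 (F 2 w)))"

text \<open>q^(X + nu) = q^nu q^X.\<close>
definition Kc where
  "Kc hbar smul K x1 x2 x3 nu = (\<lambda>w. smul (qp hbar nu) (K x1 x2 x3 w))"

definition C1op where
  "C1op hbar smul E F K = (\<lambda>w. let k = kappa hbar; E3 = E3op hbar smul E; F3 = F3op hbar smul F in
      Kc hbar smul K (-2) 0 0 (-2) w + K 0 (-2) 0 w + Kc hbar smul K 0 0 (-2) 2 w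
    + smul (k^2) (F 1 (E 1 (Kc hbar smul K (-1) (-1) 0 (-1) w)))
    + smul (k^2) (F 2 (E 2 (Kc hbar smul K 0 (-1) (-1) 1 w)))
    + smul (k^2) (F3 (E3 (Kc hbar smul K (-1) 0 (-1) 1 w)))
    - smul (k^3) (F3 (E 1 (E 2 (K (-1) 0 (-1) w)))))"

definition C2op where
  "C2op hbar smul E F K = (\<lambda>w. let k = kappa hbar; E3 = E3op hbar smul E; F3 = F3op hbar smul F in
    - Kc hbar smul K (-2) (-2) 0 (-2) w - K (-2) 0 (-2) w - Kc hbar smul K 0 (-2) (-2) 2 w
    - smul (k^2) (F 1 (E 1 (Kc hbar smul K (-1) (-1) (-2) 1 w)))
    - smul (k^2) (F 2 (E 2 (Kc hbar smul K (-2) (-1) (-1) (-1) w)))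
    - smul (k^2) (F3 (E3 (Kc hbar smul K (-1) (-2) (-1) 1 w)))
    - smul (k^3) (F 1 (F 2 (E3 (Kc hbar smul K (-1) (-2) (-1) 1 w)))))"

definition C3op where
  "C3op K = K (-2) (-2) (-2)"

text \<open>The formal power series -log(1 - c1 z - c2 z^2 - c3 z^3); fps_ln 1 = log(1+z).\<close>
definition neglog_series :: "complex \<Rightarrow> complex \<Rightarrow> complex \<Rightarrow> complex fps" where
  "neglog_series c1 c2 c3 =
     - (fps_ln 1 oo (- (fps_const c1 * fps_X + fps_const c2 * fps_X^2 + fps_const c3 * fps_X^3)))"

text \<open>F_k defined by sum_{k>=1} F_k z^k / k = -log(1 - C1 z - C2 z^2 - C3 z^3),
  evaluated at scalar values c1, c2, c3 of the Casimirs.\<close>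
definition Fk :: "complex \<Rightarrow> complex \<Rightarrow> complex \<Rightarrow> nat \<Rightarrow> complex" where
  "Fk c1 c2 c3 k = of_nat k * fps_nth (neglog_series c1 c2 c3) k"

definition Fseries :: "complex \<Rightarrow> complex \<Rightarrow> complex \<Rightarrow> complex \<Rightarrow> complex fps" where
  "Fseries hbar c1 c2 c3 = Abs_fps (\<lambda>k. if k = 0 then 0 else
      Fk c1 c2 c3 k / (qp hbar (2 * of_nat k) + 1 + qp hbar (- 2 * of_nat k)) / of_nat k)"

definition f3 :: "complex \<Rightarrow> complex fps" where
  "f3 hbar = Abs_fps (\<lambda>k. if k = 0 then 0 else
      1 / (qp hbar (2 * of_nat k) + 1 + qp hbar (- 2 * of_nat k)) / of_nat k)"

definition fps_scale :: "complex \<Rightarrow> complex fps \<Rightarrow> complex fps" where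
  "fps_scale a f = f oo (fps_const a * fps_X)"

end

theory Submission
  imports Defs
begin

(* C1 and C2 commute with every generator.  To check this, both
   sides of each commutator are brought into normal order (F's left of K's left of E's) by
   the defining relations together with derived commutation relations for the root vectors
   E3, F3 (two of which encode the q-Serre relations); the resulting formal linear
   combinations of words are then compared coefficient by coefficient, each coefficient being
   a Laurent polynomial in q.  A linear operator commuting with all generators acts on the
   cyclic module W by its eigenvalue on v0, and on v0 only the Cartan part of each C(i)
   survives, giving the elementary symmetric functions of a = q^(-2(l1+1)), b = q^(-2 l2),
   c = q^(-2(l3-1)).

   If 1 - c1 z - c2 z^2 - c3 z^3 = (1 - az)(1 - bz)(1 - cz), the logarithmic
   derivative shows that -log of it has coefficients (a^k + b^k + c^k)/k; the statements
   about F_k and F(z) follow by comparing coefficients. *)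

section \<open>Power sums and the logarithm of a cubic\<close>

lemma geometric_fps:
  fixes r :: complex
  shows "Abs_fps (\<lambda>n. r ^ (n + 1)) * (1 - fps_const r * fps_X) = fps_const r"
proof -
  have "Abs_fps (\<lambda>n. r ^ (n + 1)) * (1 - fps_const r * fps_X) =
        Abs_fps (\<lambda>n. r ^ (n + 1)) - fps_const r * (fps_X * Abs_fps (\<lambda>n. r ^ (n + 1)))"
    by (simp add: algebra_simps)
  also have "\<dots> = fps_const r"
    by (auto simp: fps_eq_iff elim: less_natE)
  finally show ?thesis .
qed

lemma fps_deriv_neg_ln_compose:
  fixes g :: "complex fps"
  assumes g0: "fps_nth g 0 = 0"
  shows "fps_deriv (- (fps_ln 1 oo g)) = - (inverse (1 + g) * fps_deriv g)"
proof -
  have "fps_deriv (- (fps_ln 1 oo g)) = - ((fps_deriv (fps_ln 1) oo g) * fps_deriv g)"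
    by (simp add: fps_compose_deriv[OF g0])
  also have "fps_deriv (fps_ln 1) = inverse (1 + fps_X)"
    by (simp add: fps_ln_deriv)
  also have "inverse (1 + fps_X) oo g = inverse ((1 + fps_X) oo g)"
    by (rule fps_inverse_compose[OF g0]) simp
  also have "(1 + fps_X) oo g = 1 + g"
    by (simp add: fps_compose_add_distrib g0)
  finally show ?thesis .
qed

lemma power_sum_series_deriv:
  fixes a b c :: complex
  defines "T \<equiv> Abs_fps (\<lambda>n. if n = 0 then 0 else (a^n + b^n + c^n) / of_nat n)"
  shows "fps_deriv T * ((1 - fps_const a * fps_X) * (1 - fps_const b * fps_X) * (1 - fps_const c * fps_X)) =
    fps_const a * (1 - fps_const b * fps_X) * (1 - fps_const c * fps_X)
    + fps_const b * (1 - fps_const a * fps_X) * (1 - fps_const c * fps_X)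
    + fps_const c * (1 - fps_const a * fps_X) * (1 - fps_const b * fps_X)"
proof -
  define A where "A r = Abs_fps (\<lambda>n. (r::complex) ^ (n + 1))" for r
  have dT: "fps_deriv T = A a + A b + A c"
    by (simp add: T_def A_def fps_eq_iff del: of_nat_Suc)
  have "fps_deriv T * ((1 - fps_const a * fps_X) * (1 - fps_const b * fps_X) * (1 - fps_const c * fps_X)) =
      (A a * (1 - fps_const a * fps_X)) * (1 - fps_const b * fps_X) * (1 - fps_const c * fps_X)
    + (A b * (1 - fps_const b * fps_X)) * (1 - fps_const a * fps_X) * (1 - fps_const c * fps_X)
    + (A c * (1 - fps_const c * fps_X)) * (1 - fps_const a * fps_X) * (1 - fps_const b * fps_X)"
    unfolding dT by algebra
  then show ?thesis
    by (simp only: A_def geometric_fps)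
qed

text \<open>Newton's identities in generating-function form: if \<open>c\<^sub>1, c\<^sub>2, c\<^sub>3\<close> are (up to sign) the
  elementary symmetric functions of \<open>a, b, c\<close>, then \<open>-log(1 - c\<^sub>1z - c\<^sub>2z\<^sup>2 - c\<^sub>3z\<^sup>3)\<close> has
  coefficients \<open>(a\<^sup>n + b\<^sup>n + c\<^sup>n)/n\<close>.\<close>
lemma neglog_series_of_roots:
  fixes a b c :: complex
  shows "neglog_series (a + b + c) (- (a*b + a*c + b*c)) (a*b*c) =
     Abs_fps (\<lambda>n. if n = 0 then 0 else (a^n + b^n + c^n) / of_nat n)"
proof -
  define N where "N = neglog_series (a + b + c) (- (a*b + a*c + b*c)) (a*b*c)"
  define T where "T = Abs_fps (\<lambda>n. if n = 0 then 0 else (a^n + b^n + c^n) / (of_nat n :: complex))"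
  define g where "g = - (fps_const (a+b+c) * fps_X + fps_const (- (a*b + a*c + b*c)) * fps_X^2
                         + fps_const (a*b*c) * fps_X^3)"
  have g0: "fps_nth g 0 = 0" by (simp add: g_def)
  have factor: "1 + g = (1 - fps_const a * fps_X) * (1 - fps_const b * fps_X) * (1 - fps_const c * fps_X)"
    unfolding g_def
    by (simp only: fps_const_add[symmetric] fps_const_mult[symmetric] fps_const_neg[symmetric]
        power2_eq_square power3_eq_cube) algebra
  have dg: "- fps_deriv g = fps_const a * (1 - fps_const b * fps_X) * (1 - fps_const c * fps_X)
    + fps_const b * (1 - fps_const a * fps_X) * (1 - fps_const c * fps_X)
    + fps_const c * (1 - fps_const a * fps_X) * (1 - fps_const b * fps_X)"
    unfolding g_def
    apply (simp del: fps_const_add fps_const_mult fps_const_neg fps_const_sub add: fps_deriv_power)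
    apply (simp only: fps_const_add[symmetric] fps_const_mult[symmetric] fps_const_neg[symmetric]
        fps_const_sub[symmetric] fps_numeral_fps_const[symmetric] power2_eq_square)
    apply algebra
    done
  have unit: "fps_nth (1 + g) 0 \<noteq> 0" using g0 by simp
  have N_eq: "N = - (fps_ln 1 oo g)" by (simp add: N_def neglog_series_def g_def)
  text \<open>Both series vanish at \<open>0\<close> and have derivative \<open>-g'/(1 + g)\<close>.\<close>
  have "fps_deriv T * (1 + g) = - fps_deriv g"
    unfolding factor dg T_def by (rule power_sum_series_deriv)
  moreover have "fps_deriv N * (1 + g) = - fps_deriv g"
    unfolding N_eq fps_deriv_neg_ln_compose[OF g0] using inverse_mult_eq_1[OF unit]
    by (simp add: algebra_simps)
  moreover have "1 + g \<noteq> 0" using unit by (metis fps_zero_nth)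
  ultimately have "fps_deriv N = fps_deriv T" by (metis mult_right_cancel)
  moreover have "fps_nth N 0 = fps_nth T 0" by (simp add: N_eq T_def)
  ultimately have "N = T" by (simp add: fps_deriv_eq_iff)
  then show ?thesis by (simp only: N_def T_def)
qed

lemma Fk_of_roots:
  fixes a b c :: complex
  assumes "k \<ge> 1"
  shows "Fk (a + b + c) (- (a*b + a*c + b*c)) (a*b*c) k = a^k + b^k + c^k"
  using assms unfolding Fk_def neglog_series_of_roots by simp

text \<open>If the \<open>F\<^sub>k\<close> are power sums, \<open>F(z)\<close> splits into three rescaled copies of \<open>f\<^sub>3\<close>; this is a
  coefficientwise identity and needs no hypothesis on the denominators.\<close>
lemma Fseries_of_power_sums:
  fixes a b c :: complex
  assumes "\<And>k. k \<ge> 1 \<Longrightarrow> Fk c1 c2 c3 k = a^k + b^k + c^k"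
  shows "Fseries hbar c1 c2 c3 = fps_scale a (f3 hbar) + fps_scale b (f3 hbar) + fps_scale c (f3 hbar)"
  unfolding fps_scale_def fps_compose_linear
  by (auto simp: fps_eq_iff Fseries_def f3_def assms divide_inverse algebra_simps)

text \<open>\<open>qp hbar \<nu>\<close> is \<open>q\<^sup>\<nu>\<close>; it is an exponential, hence a homomorphism from \<open>(\<complex>, +)\<close> to \<open>\<complex>\<^sup>*\<close>.\<close>

lemma qp_zero [simp]: "qp hbar 0 = 1"
  by (simp add: qp_def)

lemma qp_nonzero: "qp hbar a \<noteq> 0"
  by (simp add: qp_def)

lemma qp_add: "qp hbar (a + b) = qp hbar a * qp hbar b"
  by (simp add: qp_def distrib_left exp_add)

lemma qp_diff: "qp hbar (a - b) = qp hbar a / qp hbar b"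
  by (simp add: qp_def right_diff_distrib exp_diff)

lemma qp_uminus: "qp hbar (- a) = inverse (qp hbar a)"
  by (simp add: qp_def exp_minus)

lemma qp_neg_sum: "qp hbar (- a - b) = qp hbar (- a) * qp hbar (- b)"
  by (simp add: qp_add[symmetric])

lemma qp_mult_of_nat: "qp hbar (x * of_nat k) = qp hbar x ^ k"
  by (simp add: qp_def exp_of_nat_mult[symmetric] mult.commute mult.left_commute)

lemma qp_numeral_mult: "qp hbar (numeral n * a) = qp hbar a ^ numeral n"
  by (simp add: qp_def exp_of_nat_mult[symmetric] mult.left_commute)

lemma qp_numeral: "qp hbar (numeral n) = qp hbar 1 ^ numeral n"
  by (simp add: qp_def exp_of_nat_mult[symmetric] mult.commute)

lemma qp_neg_numeral: "qp hbar (- numeral n) = inverse (qp hbar 1) ^ numeral n"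
  by (simp add: qp_def exp_of_nat_mult[symmetric] mult.commute exp_minus[symmetric] power_inverse)

lemma qp_neg_one: "qp hbar (- 1) = inverse (qp hbar 1)"
  by (rule qp_uminus)

lemmas qp_expand = qp_add qp_diff qp_uminus qp_numeral_mult qp_numeral

lemma kappa_eq: "kappa hbar = qp hbar 1 - inverse (qp hbar 1)"
  by (simp add: kappa_def qp_neg_one)

text \<open>\<open>\<kappa>\<^sub>q \<noteq> 0\<close> exactly because \<open>q\<^sup>2 \<noteq> 1\<close>; this makes the relation \<open>[E\<^sub>i,F\<^sub>i]\<close> meaningful.\<close>
lemma kappa_nonzero:
  assumes "qp hbar 1 ^ 2 \<noteq> 1"
  shows "kappa hbar \<noteq> 0"
proof
  assume "kappa hbar = 0"
  then have "qp hbar 1 = inverse (qp hbar 1)"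
    by (simp add: kappa_eq)
  then have "qp hbar 1 * qp hbar 1 = 1"
    by (metis qp_nonzero right_inverse)
  with assms show False by (simp add: power2_eq_square)
qed

lemma qint_two:
  assumes "qp hbar 1 ^ 2 \<noteq> 1"
  shows "qint hbar 2 = qp hbar 1 + inverse (qp hbar 1)"
proof -
  have "qint hbar 2 = (qp hbar 1 ^ 2 - inverse (qp hbar 1) ^ 2) / kappa hbar"
    by (simp add: qint_def qp_numeral qp_neg_numeral)
  also have "qp hbar 1 ^ 2 - inverse (qp hbar 1) ^ 2 = (qp hbar 1 + inverse (qp hbar 1)) * kappa hbar"
    by (simp add: kappa_eq power2_eq_square algebra_simps)
  finally show ?thesis using kappa_nonzero[OF assms] by simp
qed

section \<open>Representations of \<open>U\<^sub>q(gl\<^sub>3)\<close>\<close>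

text \<open>Keep numeral indices such as \<open>E 1\<close> intact instead of rewriting them to \<open>E (Suc 0)\<close>.\<close>
declare One_nat_def [simp del]

text \<open>Letters naming the generators, so that words name monomials: \<open>LE3\<close>, \<open>LF3\<close> stand for
  the root vectors \<open>E\<^sub>3\<close>, \<open>F\<^sub>3\<close> and \<open>LK a b c\<close> for \<open>q\<^bsup>aG\<^sub>1+bG\<^sub>2+cG\<^sub>3\<^esup>\<close>.\<close>
datatype letter = LE nat | LF nat | LE3 | LF3 | LK complex complex complex

definition coeff_of :: "(complex \<times> letter list) list \<Rightarrow> letter list \<Rightarrow> complex" where
  "coeff_of l u = sum_list (map fst (filter (\<lambda>p. snd p = u) l))"

locale uq_gl3_rep =
  fixes hbar :: complex and smul :: "complex \<Rightarrow> 'w::ab_group_add \<Rightarrow> 'w"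
    and E F :: "nat \<Rightarrow> 'w \<Rightarrow> 'w" and K :: "complex \<Rightarrow> complex \<Rightarrow> complex \<Rightarrow> 'w \<Rightarrow> 'w"
  assumes rep: "is_Uq_gl3_rep hbar smul E F K"
    and q_square_ne_1: "qp hbar 1 ^ 2 \<noteq> 1"
begin

lemma
  shows rep_vector_space: "vector_space smul"
    and rep_linear_EF: "\<forall>i\<in>{1,2}. Vector_Spaces.linear smul smul (E i) \<and> Vector_Spaces.linear smul smul (F i)"
    and rep_linear_K: "\<forall>x1 x2 x3. Vector_Spaces.linear smul smul (K x1 x2 x3)"
    and rep_K_zero: "K 0 0 0 = id"
    and rep_K_mult: "\<forall>x1 x2 x3 y1 y2 y3. K x1 x2 x3 \<circ> K y1 y2 y3 = K (x1+y1) (x2+y2) (x3+y3)"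
    and rep_K_E: "\<forall>i\<in>{1,2}. \<forall>x1 x2 x3 w.
        K x1 x2 x3 (E i (K (-x1) (-x2) (-x3) w)) = smul (qp hbar (alpha i x1 x2 x3)) (E i w)"
    and rep_K_F: "\<forall>i\<in>{1,2}. \<forall>x1 x2 x3 w.
        K x1 x2 x3 (F i (K (-x1) (-x2) (-x3) w)) = smul (qp hbar (- alpha i x1 x2 x3)) (F i w)"
    and rep_E1_F1: "\<forall>w. E 1 (F 1 w) - F 1 (E 1 w) = smul (1 / kappa hbar) (K 1 (-1) 0 w - K (-1) 1 0 w)"
    and rep_E2_F2: "\<forall>w. E 2 (F 2 w) - F 2 (E 2 w) = smul (1 / kappa hbar) (K 0 1 (-1) w - K 0 (-1) 1 w)"
    and rep_E1_F2: "\<forall>w. E 1 (F 2 w) - F 2 (E 1 w) = 0"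
    and rep_E2_F1: "\<forall>w. E 2 (F 1 w) - F 1 (E 2 w) = 0"
    and rep_serre: "\<forall>i\<in>{1,2}. \<forall>j\<in>{1,2}. i \<noteq> j \<longrightarrow> (\<forall>w.
        E i (E i (E j w)) - smul (qint hbar 2) (E i (E j (E i w))) + E j (E i (E i w)) = 0 \<and>
        F i (F i (F j w)) - smul (qint hbar 2) (F i (F j (F i w))) + F j (F i (F i w)) = 0)"
  using rep unfolding is_Uq_gl3_rep_def by - (elim conjE, assumption)+

sublocale vs: vector_space smul
  by (rule rep_vector_space)

text \<open>Gives access to the library facts about linear maps \<open>W \<rightarrow> W\<close>.\<close>

sublocale vsp: vector_space_pair smul smul ..

lemma linear_generators:
  "Vector_Spaces.linear smul smul (E 1)" "Vector_Spaces.linear smul smul (E 2)"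
  "Vector_Spaces.linear smul smul (F 1)" "Vector_Spaces.linear smul smul (F 2)"
  "Vector_Spaces.linear smul smul (K a b c)"
  using rep_linear_EF rep_linear_K by simp_all

lemma K_zero: "K 0 0 0 x = x"
  using rep_K_zero by simp

lemma K_mult: "K a b c (K d e f x) = K (a + d) (b + e) (c + f) x"
  using rep_K_mult by (metis comp_apply)

lemma K_conj_E: "i \<in> {1,2} \<Longrightarrow> K a b c (E i (K (-a) (-b) (-c) w)) = smul (qp hbar (alpha i a b c)) (E i w)"
  and K_conj_F: "i \<in> {1,2} \<Longrightarrow> K a b c (F i (K (-a) (-b) (-c) w)) = smul (qp hbar (- alpha i a b c)) (F i w)"
  using rep_K_E rep_K_F by blast+

lemma comm_E1_F1: "E 1 (F 1 w) = F 1 (E 1 w) + smul (1 / kappa hbar) (K 1 (-1) 0 w - K (-1) 1 0 w)"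
  and comm_E2_F2: "E 2 (F 2 w) = F 2 (E 2 w) + smul (1 / kappa hbar) (K 0 1 (-1) w - K 0 (-1) 1 w)"
  and comm_E1_F2: "E 1 (F 2 w) = F 2 (E 1 w)"
  and comm_E2_F1: "E 2 (F 1 w) = F 1 (E 2 w)"
  using rep_E1_F1 rep_E2_F2 rep_E1_F2 rep_E2_F1 by (simp_all add: diff_eq_eq add.commute)

lemma serre:
  "E 1 (E 1 (E 2 w)) - smul (qint hbar 2) (E 1 (E 2 (E 1 w))) + E 2 (E 1 (E 1 w)) = 0"
  "E 2 (E 2 (E 1 w)) - smul (qint hbar 2) (E 2 (E 1 (E 2 w))) + E 1 (E 2 (E 2 w)) = 0"
  "F 1 (F 1 (F 2 w)) - smul (qint hbar 2) (F 1 (F 2 (F 1 w))) + F 2 (F 1 (F 1 w)) = 0"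
  "F 2 (F 2 (F 1 w)) - smul (qint hbar 2) (F 2 (F 1 (F 2 w))) + F 1 (F 2 (F 2 w)) = 0"
  using rep_serre by auto

text \<open>The weight relations, in the form used to move \<open>K\<close> to the left of \<open>F\<^sub>i\<close> and to the right of \<open>E\<^sub>i\<close>.\<close>
lemma K_F: "i \<in> {1,2} \<Longrightarrow> K a b c (F i x) = smul (qp hbar (- alpha i a b c)) (F i (K a b c x))"
  using K_conj_F[of i a b c "K a b c x"] by (simp add: K_mult K_zero)

lemma E_K: "i \<in> {1,2} \<Longrightarrow> E i (K a b c x) = smul (qp hbar (- alpha i a b c)) (K a b c (E i x))"
proof -
  assume i: "i \<in> {1,2}"
  have "K a b c (E i x) = smul (qp hbar (alpha i a b c)) (E i (K a b c x))"
    using K_conj_E[OF i, of a b c "K a b c x"] by (simp add: K_mult K_zero)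
  then have "smul (qp hbar (- alpha i a b c)) (K a b c (E i x)) =
             smul (qp hbar (- alpha i a b c) * qp hbar (alpha i a b c)) (E i (K a b c x))"
    by simp
  also have "qp hbar (- alpha i a b c) * qp hbar (alpha i a b c) = 1"
    by (simp add: qp_add[symmetric])
  finally show ?thesis by simp
qed

abbreviation E3 :: "'w \<Rightarrow> 'w" where "E3 \<equiv> E3op hbar smul E"
abbreviation F3 :: "'w \<Rightarrow> 'w" where "F3 \<equiv> F3op hbar smul F"

lemmas scale_simps = vs.scale_right_distrib vs.scale_right_diff_distrib vs.scale_minus_right
  vs.scale_scale vs.scale_zero_right vs.scale_one vs.scale_zero_left

lemma linear_root_vectors:
  "Vector_Spaces.linear smul smul E3" "Vector_Spaces.linear smul smul F3"
  unfolding E3op_def F3op_def Vector_Spaces.linear_iff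
  by (simp_all add: vs.vector_space_axioms linear_generators[THEN vsp.linear_add]
      linear_generators[THEN vsp.linear_scale] vs.scale_right_distrib vs.scale_right_diff_distrib mult.commute)

lemmas linear_ops = linear_generators linear_root_vectors

lemmas linearity = linear_ops[THEN vsp.linear_add] linear_ops[THEN vsp.linear_scale]
  linear_ops[THEN vsp.linear_diff] linear_ops[THEN vsp.linear_neg] linear_ops[THEN vsp.linear_0]

subsection \<open>Comparing coefficients of words\<close>

text \<open>Identities between operators are verified by expanding both sides into formal linear
  combinations of words in the generators, applied to a vector \<open>w\<close>, and comparing the
  coefficient of each word.\<close>

fun act :: "letter list \<Rightarrow> 'w \<Rightarrow> 'w" where
  "act [] w = w"
| "act (LE i # u) w = E i (act u w)"
| "act (LF i # u) w = F i (act u w)"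
| "act (LE3 # u) w = E3 (act u w)"
| "act (LF3 # u) w = F3 (act u w)"
| "act (LK a b c # u) w = K a b c (act u w)"

text \<open>Words must stay folded while an expression is being normal ordered.\<close>
declare act.simps [simp del]

lemma act_Nil: "act [] w = w"
  by (simp add: act.simps)

lemma by_words:
  assumes "\<And>w. P (act [] w)"
  shows "P x"
  using assms[of x] by (simp add: act_Nil)

definition lin_comb :: "(complex \<times> letter list) list \<Rightarrow> 'w \<Rightarrow> 'w" where
  "lin_comb l w = sum_list (map (\<lambda>(a, u). smul a (act u w)) l)"

lemma lin_comb_as_sum:
  assumes "finite U" "set (map snd l) \<subseteq> U"
  shows "lin_comb l w = (\<Sum>u\<in>U. smul (coeff_of l u) (act u w))"
  using assms(2)
proof (induction l)
  case Nil
  then show ?case by (simp add: lin_comb_def coeff_of_def)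
next
  case (Cons p l)
  obtain a v where p: "p = (a, v)" by fastforce
  have v: "v \<in> U" using Cons.prems p by auto
  have "smul a (act v w) = (\<Sum>u\<in>U. if u = v then smul a (act u w) else 0)"
    using v assms(1) by (simp add: sum.delta)
  also have "\<dots> = (\<Sum>u\<in>U. smul (if u = v then a else 0) (act u w))"
    by (rule sum.cong) auto
  finally have "smul a (act v w) = \<dots>" .
  moreover have "lin_comb (p # l) w = smul a (act v w) + lin_comb l w"
    by (simp add: lin_comb_def p)
  ultimately show ?case
    using Cons by (auto simp add: sum.distrib[symmetric] vs.scale_left_distrib[symmetric]
        coeff_of_def p intro!: sum.cong)
qed

lemma lin_comb_eqI:
  assumes "\<forall>u\<in>set (map snd l @ map snd l'). coeff_of l u = coeff_of l' u"
  shows "lin_comb l w = lin_comb l' w"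
proof -
  let ?U = "set (map snd l @ map snd l')"
  have "lin_comb l w = (\<Sum>u\<in>?U. smul (coeff_of l u) (act u w))"
    by (rule lin_comb_as_sum) auto
  also have "\<dots> = (\<Sum>u\<in>?U. smul (coeff_of l' u) (act u w))"
    using assms by (intro sum.cong) auto
  also have "\<dots> = lin_comb l' w"
    by (rule lin_comb_as_sum[symmetric]) auto
  finally show ?thesis .
qed

lemma lin_comb_op:
  assumes "Vector_Spaces.linear smul smul f" "\<And>u. f (act u w) = act (x # u) w"
  shows "f (lin_comb l w) = lin_comb (map (\<lambda>(a, u). (a, x # u)) l) w"
  by (induction l) (auto simp add: lin_comb_def assms vsp.linear_add[OF assms(1)]
      vsp.linear_scale[OF assms(1)] vsp.linear_0[OF assms(1)])

lemma lin_comb_rules: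
  "act u w = lin_comb [(1, u)] w"
  "lin_comb l w + lin_comb l' w = lin_comb (l @ l') w"
  "- lin_comb l w = lin_comb (map (\<lambda>(a, u). (- a, u)) l) w"
  "lin_comb l w - lin_comb l' w = lin_comb (l @ map (\<lambda>(a, u). (- a, u)) l') w"
  "smul c (lin_comb l w) = lin_comb (map (\<lambda>(a, u). (c * a, u)) l) w"
proof -
  show neg: "- lin_comb l w = lin_comb (map (\<lambda>(a, u). (- a, u)) l) w" for l
    by (induction l) (auto simp add: lin_comb_def)
  show "act u w = lin_comb [(1, u)] w" by (simp add: lin_comb_def)
  show "lin_comb l w + lin_comb l' w = lin_comb (l @ l') w" by (simp add: lin_comb_def)
  show "lin_comb l w - lin_comb l' w = lin_comb (l @ map (\<lambda>(a, u). (- a, u)) l') w"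
    by (simp only: diff_conv_add_uminus neg) (simp add: lin_comb_def)
  show "smul c (lin_comb l w) = lin_comb (map (\<lambda>(a, u). (c * a, u)) l) w"
    by (induction l) (auto simp add: lin_comb_def vs.scale_right_distrib)
qed

lemma lin_comb_generators:
  "E 1 (lin_comb l w) = lin_comb (map (\<lambda>(a, u). (a, LE 1 # u)) l) w"
  "E 2 (lin_comb l w) = lin_comb (map (\<lambda>(a, u). (a, LE 2 # u)) l) w"
  "F 1 (lin_comb l w) = lin_comb (map (\<lambda>(a, u). (a, LF 1 # u)) l) w"
  "F 2 (lin_comb l w) = lin_comb (map (\<lambda>(a, u). (a, LF 2 # u)) l) w"
  "E3 (lin_comb l w) = lin_comb (map (\<lambda>(a, u). (a, LE3 # u)) l) w"
  "F3 (lin_comb l w) = lin_comb (map (\<lambda>(a, u). (a, LF3 # u)) l) w"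
  "K x y z (lin_comb l w) = lin_comb (map (\<lambda>(a, u). (a, LK x y z # u)) l) w"
  by (rule lin_comb_op, rule linear_ops, simp add: act.simps)+

lemmas word_expansion = lin_comb_rules lin_comb_generators append.simps list.map prod.case

lemmas q_facts = qp_numeral qp_neg_numeral qp_neg_one qint_two[OF q_square_ne_1] alpha_def

lemmas q_nonzero = qp_nonzero[of hbar 1] kappa_nonzero[OF q_square_ne_1]

text \<open>The definitions of \<open>E\<^sub>3\<close>, \<open>F\<^sub>3\<close>, read as rules bringing products into normal order.\<close>
lemma F2_F1: "F 2 (F 1 x) = F3 x + smul (qp hbar 1) (F 1 (F 2 x))"
  by (simp add: F3op_def)

lemma E1_E2: "E 1 (E 2 x) = E3 x + smul (qp hbar (-1)) (E 2 (E 1 x))"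
  by (simp add: E3op_def)

text \<open>The \<open>q\<close>-Serre relations say exactly that \<open>E\<^sub>3\<close>, \<open>F\<^sub>3\<close> \<open>q\<close>-commute with the simple root
  vectors: each difference below expands to the left-hand side of a Serre relation.\<close>
lemma F3_F1: "F3 (F 1 x) = smul (qp hbar (-1)) (F 1 (F3 x))"
proof -
  have "F3 (F 1 x) - smul (qp hbar (-1)) (F 1 (F3 x)) =
    F 1 (F 1 (F 2 x)) - smul (qint hbar 2) (F 1 (F 2 (F 1 x))) + F 2 (F 1 (F 1 x))"
    by (rule by_words, simp add: F3op_def linearity scale_simps, simp only: word_expansion,
        rule lin_comb_eqI, simp add: coeff_of_def q_facts field_simps q_nonzero;
        (simp add: kappa_eq field_simps q_nonzero)?; (intro conjI)?; algebra)
  with serre(3) show ?thesis by simp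
qed

lemma F2_F3: "F 2 (F3 x) = smul (qp hbar (-1)) (F3 (F 2 x))"
proof -
  have "F 2 (F3 x) - smul (qp hbar (-1)) (F3 (F 2 x)) =
    F 2 (F 2 (F 1 x)) - smul (qint hbar 2) (F 2 (F 1 (F 2 x))) + F 1 (F 2 (F 2 x))"
    by (rule by_words, simp add: F3op_def linearity scale_simps, simp only: word_expansion,
        rule lin_comb_eqI, simp add: coeff_of_def q_facts field_simps q_nonzero;
        (simp add: kappa_eq field_simps q_nonzero)?; (intro conjI)?; algebra)
  with serre(4) show ?thesis by simp
qed

lemma E1_E3: "E 1 (E3 x) = smul (qp hbar 1) (E3 (E 1 x))"
proof -
  have "E 1 (E3 x) - smul (qp hbar 1) (E3 (E 1 x)) =
    E 1 (E 1 (E 2 x)) - smul (qint hbar 2) (E 1 (E 2 (E 1 x))) + E 2 (E 1 (E 1 x))"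
    by (rule by_words, simp add: E3op_def linearity scale_simps, simp only: word_expansion,
        rule lin_comb_eqI, simp add: coeff_of_def q_facts field_simps q_nonzero;
        (simp add: kappa_eq field_simps q_nonzero)?; (intro conjI)?; algebra)
  with serre(1) show ?thesis by simp
qed

lemma E3_E2: "E3 (E 2 x) = smul (qp hbar 1) (E 2 (E3 x))"
proof -
  have "E3 (E 2 x) - smul (qp hbar 1) (E 2 (E3 x)) =
    E 2 (E 2 (E 1 x)) - smul (qint hbar 2) (E 2 (E 1 (E 2 x))) + E 1 (E 2 (E 2 x))"
    by (rule by_words, simp add: E3op_def linearity scale_simps, simp only: word_expansion,
        rule lin_comb_eqI, simp add: coeff_of_def q_facts field_simps q_nonzero;
        (simp add: kappa_eq field_simps q_nonzero)?; (intro conjI)?; algebra)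
  with serre(2) show ?thesis by simp
qed

lemma K_F3: "K a b c (F3 x) = smul (qp hbar (- (alpha 1 a b c + alpha 2 a b c))) (F3 (K a b c x))"
  by (simp add: F3op_def K_F linearity scale_simps qp_neg_sum mult_ac)

lemma E3_K: "E3 (K a b c x) = smul (qp hbar (- (alpha 1 a b c + alpha 2 a b c))) (K a b c (E3 x))"
  by (simp add: E3op_def E_K linearity scale_simps qp_neg_sum mult_ac)

lemmas basic_relations = comm_E1_F1 comm_E2_F2 comm_E1_F2 comm_E2_F1 K_F E_K K_mult K_zero

text \<open>Commutation of the root vectors with negative root vectors; with these, every product
  can be brought into normal order.\<close>
lemma E1_F3: "E 1 (F3 x) = F3 (E 1 x) - smul (qp hbar 1) (F 2 (K 1 (-1) 0 x))"
  by (rule by_words, simp add: E3op_def F3op_def basic_relations linearity scale_simps alpha_def,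
      simp only: word_expansion, rule lin_comb_eqI, simp add: coeff_of_def q_facts field_simps q_nonzero;
      (simp add: kappa_eq field_simps q_nonzero)?; (intro conjI)?; algebra)

lemma E2_F3: "E 2 (F3 x) = F3 (E 2 x) + F 1 (K 0 (-1) 1 x)"
  by (rule by_words, simp add: E3op_def F3op_def basic_relations linearity scale_simps alpha_def,
      simp only: word_expansion, rule lin_comb_eqI, simp add: coeff_of_def q_facts field_simps q_nonzero;
      (simp add: kappa_eq field_simps q_nonzero)?; (intro conjI)?; algebra)

lemma E3_F1: "E3 (F 1 x) = F 1 (E3 x) - smul (qp hbar (-1)) (K (-1) 1 0 (E 2 x))"
  by (rule by_words, simp add: E3op_def F3op_def basic_relations linearity scale_simps alpha_def,
      simp only: word_expansion, rule lin_comb_eqI, simp add: coeff_of_def q_facts field_simps q_nonzero;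
      (simp add: kappa_eq field_simps q_nonzero)?; (intro conjI)?; algebra)

lemma E3_F2: "E3 (F 2 x) = F 2 (E3 x) + K 0 1 (-1) (E 1 x)"
  by (rule by_words, simp add: E3op_def F3op_def basic_relations linearity scale_simps alpha_def,
      simp only: word_expansion, rule lin_comb_eqI, simp add: coeff_of_def q_facts field_simps q_nonzero;
      (simp add: kappa_eq field_simps q_nonzero)?; (intro conjI)?; algebra)

lemma E3_F3: "E3 (F3 x) = F3 (E3 x) + smul (1 / kappa hbar) (K 1 0 (-1) x - K (-1) 0 1 x)"
  by (rule by_words, simp add: E3op_def F3op_def basic_relations linearity scale_simps alpha_def,
      simp only: word_expansion, rule lin_comb_eqI, simp add: coeff_of_def q_facts field_simps q_nonzero;
      (simp add: kappa_eq field_simps q_nonzero)?; (intro conjI)?; algebra)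

lemmas normal_ordering = F2_F1 F3_F1 F2_F3 E1_E2 E1_E3 E3_E2 basic_relations
  E1_F3 E2_F3 E3_F1 E3_F2 E3_F3 K_F3 E3_K

section \<open>The Casimir elements are central\<close>

abbreviation C1 :: "'w \<Rightarrow> 'w" where "C1 \<equiv> C1op hbar smul E F K"
abbreviation C2 :: "'w \<Rightarrow> 'w" where "C2 \<equiv> C2op hbar smul E F K"

text \<open>Each of \<open>C\<^sup>(\<^sup>1\<^sup>)\<close>, \<open>C\<^sup>(\<^sup>2\<^sup>)\<close> commutes with the generators: normal ordering both sides
  of the commutator yields the same combination of words.\<close>
lemma C1_E:
  assumes "i \<in> {1,2}"
  shows "C1 (E i x) = E i (C1 x)"
proof -
  have "C1 (E 1 x) = E 1 (C1 x)" "C1 (E 2 x) = E 2 (C1 x)"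
    by (rule by_words, simp add: C1op_def Let_def Kc_def normal_ordering linearity scale_simps alpha_def,
        simp only: word_expansion, rule lin_comb_eqI, simp add: coeff_of_def q_facts field_simps q_nonzero;
        (simp add: kappa_eq field_simps q_nonzero)?; (intro conjI)?; algebra)+
  with assms show ?thesis by auto
qed

lemma C1_F:
  assumes "i \<in> {1,2}"
  shows "C1 (F i x) = F i (C1 x)"
proof -
  have "C1 (F 1 x) = F 1 (C1 x)" "C1 (F 2 x) = F 2 (C1 x)"
    by (rule by_words, simp add: C1op_def Let_def Kc_def normal_ordering linearity scale_simps alpha_def,
        simp only: word_expansion, rule lin_comb_eqI, simp add: coeff_of_def q_facts field_simps q_nonzero;
        (simp add: kappa_eq field_simps q_nonzero)?; (intro conjI)?; algebra)+
  with assms show ?thesis by auto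
qed

lemma C2_E:
  assumes "i \<in> {1,2}"
  shows "C2 (E i x) = E i (C2 x)"
proof -
  have "C2 (E 1 x) = E 1 (C2 x)" "C2 (E 2 x) = E 2 (C2 x)"
    by (rule by_words, simp add: C2op_def Let_def Kc_def normal_ordering linearity scale_simps alpha_def,
        simp only: word_expansion, rule lin_comb_eqI, simp add: coeff_of_def q_facts field_simps q_nonzero;
        (simp add: kappa_eq field_simps q_nonzero)?; (intro conjI)?; algebra)+
  with assms show ?thesis by auto
qed

lemma C2_F:
  assumes "i \<in> {1,2}"
  shows "C2 (F i x) = F i (C2 x)"
proof -
  have "C2 (F 1 x) = F 1 (C2 x)" "C2 (F 2 x) = F 2 (C2 x)"
    by (rule by_words, simp add: C2op_def Let_def Kc_def normal_ordering linearity scale_simps alpha_def,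
        simp only: word_expansion, rule lin_comb_eqI, simp add: coeff_of_def q_facts field_simps q_nonzero;
        (simp add: kappa_eq field_simps q_nonzero)?; (intro conjI)?; algebra)+
  with assms show ?thesis by auto
qed

text \<open>Commuting with \<open>K\<close> needs only the weight relations: every term of \<open>C\<^sup>(\<^sup>i\<^sup>)\<close> has weight zero.\<close>
lemma C1_K: "C1 (K a b c x) = K a b c (C1 x)"
  and C2_K: "C2 (K a b c x) = K a b c (C2 x)"
proof -
  have qq: "qp hbar (b - a) * qp hbar (c - b) = qp hbar (c - a)"
    by (simp add: qp_add[symmetric])
  show "C1 (K a b c x) = K a b c (C1 x)" "C2 (K a b c x) = K a b c (C2 x)"
    by (simp_all add: C1op_def C2op_def Let_def Kc_def normal_ordering linearity scale_simps alpha_def add_ac qq)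
qed

text \<open>\<open>C\<^sup>(\<^sup>3\<^sup>)\<close> is a group-like Cartan element of weight zero, hence central.\<close>
lemma C3_E: "i \<in> {1,2} \<Longrightarrow> C3op K (E i x) = E i (C3op K x)"
  and C3_F: "i \<in> {1,2} \<Longrightarrow> C3op K (F i x) = F i (C3op K x)"
  and C3_K: "C3op K (K a b c x) = K a b c (C3op K x)"
  by (auto simp: C3op_def E_K K_F K_mult alpha_def add.commute)

lemma linear_casimirs:
  "Vector_Spaces.linear smul smul C1" "Vector_Spaces.linear smul smul C2"
  "Vector_Spaces.linear smul smul (C3op K)"
  unfolding Vector_Spaces.linear_iff C1op_def C2op_def C3op_def Let_def Kc_def
  by (simp_all add: vs.vector_space_axioms linearity scale_simps algebra_simps)

text \<open>A linear operator commuting with all generators and having \<open>v\<^sub>0\<close> as an eigenvector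
  acts by the eigenvalue on the whole module generated by \<open>v\<^sub>0\<close>: its eigenspace is a
  submodule containing \<open>v\<^sub>0\<close>.\<close>
lemma central_acts_by_scalar:
  assumes gen: "generated_by smul E F K v0"
    and lin: "Vector_Spaces.linear smul smul T"
    and comm_E: "\<And>i x. i \<in> {1,2} \<Longrightarrow> T (E i x) = E i (T x)"
    and comm_F: "\<And>i x. i \<in> {1,2} \<Longrightarrow> T (F i x) = F i (T x)"
    and comm_K: "\<And>a b c x. T (K a b c x) = K a b c (T x)"
    and eigen: "T v0 = smul c v0"
  shows "T w = smul c w"
proof -
  define S where "S = {w. T w = smul c w}"
  have subspace: "vs.subspace S"
    unfolding vs.subspace_def S_def
    by (simp add: vsp.linear_0[OF lin] vsp.linear_add[OF lin] vsp.linear_scale[OF lin]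
        vs.scale_right_distrib vs.scale_scale mult.commute)
  have invariant_EF: "\<forall>i\<in>{1,2}. E i ` S \<subseteq> S \<and> F i ` S \<subseteq> S"
  proof (intro ballI conjI image_subsetI)
    fix i :: nat and x assume i: "i \<in> {1,2}" and x: "x \<in> S"
    have "Vector_Spaces.linear smul smul (E i)" "Vector_Spaces.linear smul smul (F i)"
      using i rep_linear_EF by auto
    note scale = this[THEN vsp.linear_scale]
    show "E i x \<in> S" "F i x \<in> S"
      using x by (simp_all add: S_def comm_E[OF i] comm_F[OF i] scale)
  qed
  have invariant_K: "\<forall>a b c. K a b c ` S \<subseteq> S"
    by (auto simp: S_def comm_K linear_generators[THEN vsp.linear_scale])
  have "v0 \<in> S" using eigen by (simp add: S_def)
  then have "S = UNIV"
    using gen subspace invariant_EF invariant_K unfolding generated_by_def by blast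
  then show ?thesis by (auto simp: S_def)
qed

lemma K_on_weight_vector:
  assumes wt1: "\<forall>nu. K nu 0 0 v0 = smul (qp hbar (nu * l1)) v0"
    and wt2: "\<forall>nu. K 0 nu 0 v0 = smul (qp hbar (nu * l2)) v0"
    and wt3: "\<forall>nu. K 0 0 nu v0 = smul (qp hbar (nu * l3)) v0"
  shows "K x1 x2 x3 v0 = smul (qp hbar (x1 * l1 + x2 * l2 + x3 * l3)) v0"
proof -
  have "K x1 x2 x3 v0 = K x1 0 0 (K 0 x2 0 (K 0 0 x3 v0))"
    by (simp add: K_mult)
  also have "\<dots> = smul (qp hbar (x1 * l1) * qp hbar (x2 * l2) * qp hbar (x3 * l3)) v0"
    using wt1 wt2 wt3 by (simp add: linear_generators[THEN vsp.linear_scale] mult_ac)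
  finally show ?thesis by (simp add: qp_add)
qed

text \<open>On a highest weight vector all terms containing an \<open>E\<close> vanish, and the Cartan parts of
  the Casimir elements give the elementary symmetric functions of \<open>a\<close>, \<open>b\<close>, \<open>c\<close>.\<close>
lemma casimirs_on_highest_weight_vector:
  assumes Kv0: "\<And>x1 x2 x3. K x1 x2 x3 v0 = smul (qp hbar (x1 * l1 + x2 * l2 + x3 * l3)) v0"
    and hw: "E 1 v0 = 0" "E 2 v0 = 0"
  defines "a \<equiv> qp hbar (-2 * (l1 + 1))" and "b \<equiv> qp hbar (-2 * l2)" and "c \<equiv> qp hbar (-2 * (l3 - 1))"
  shows "C1 v0 = smul (a + b + c) v0"
    and "C2 v0 = smul (- (a*b + a*c + b*c)) v0"
    and "C3op K v0 = smul (a*b*c) v0"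
proof -
  have E3_v0: "E3 v0 = 0"
    by (simp add: E3op_def hw linearity)
  have E_Kv0: "E 1 (K x1 x2 x3 v0) = 0" "E 2 (K x1 x2 x3 v0) = 0" "E3 (K x1 x2 x3 v0) = 0" for x1 x2 x3
    by (simp_all add: Kv0 linearity hw E3_v0)
  note collect = vs.scale_left_distrib[symmetric] vs.scale_left_diff_distrib[symmetric]
    vs.scale_minus_left[symmetric]
  show "C1 v0 = smul (a + b + c) v0"
    by (simp add: C1op_def Let_def Kc_def E_Kv0 hw E3_v0 linearity Kv0, simp only: collect,
        rule arg_cong[where f = "\<lambda>t. smul t v0"], simp add: a_def b_def c_def qp_expand field_simps qp_nonzero)
  show "C2 v0 = smul (- (a*b + a*c + b*c)) v0"
    by (simp add: C2op_def Let_def Kc_def E_Kv0 hw E3_v0 linearity Kv0, simp only: collect,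
        rule arg_cong[where f = "\<lambda>t. smul t v0"], simp add: a_def b_def c_def qp_expand field_simps qp_nonzero)
  show "C3op K v0 = smul (a*b*c) v0"
    by (simp add: C3op_def Kv0 a_def b_def c_def qp_expand field_simps qp_nonzero)
qed

end

theorem mainTheorem3:
  fixes hbar :: complex and smul :: "complex \<Rightarrow> 'w::ab_group_add \<Rightarrow> 'w"
    and E F :: "nat \<Rightarrow> 'w \<Rightarrow> 'w" and K :: "complex \<Rightarrow> complex \<Rightarrow> complex \<Rightarrow> 'w \<Rightarrow> 'w"
    and v0 :: 'w and l1 l2 l3 :: complex
  assumes q2: "qp hbar 1 ^ 2 \<noteq> 1"
    and rep: "is_Uq_gl3_rep hbar smul E F K"
    and gen: "generated_by smul E F K v0"
    and wt1: "\<forall>nu. K nu 0 0 v0 = smul (qp hbar (nu * l1)) v0"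
    and wt2: "\<forall>nu. K 0 nu 0 v0 = smul (qp hbar (nu * l2)) v0"
    and wt3: "\<forall>nu. K 0 0 nu v0 = smul (qp hbar (nu * l3)) v0"
    and hw: "E 1 v0 = 0" "E 2 v0 = 0"
  shows "\<exists>c1 c2 c3.
     (\<forall>w. C1op hbar smul E F K w = smul c1 w) \<and>
     (\<forall>w. C2op hbar smul E F K w = smul c2 w) \<and>
     (\<forall>w. C3op K w = smul c3 w) \<and>
     [:1, - c1, - c2, - c3:] =
       [:1, - qp hbar (-2 * (l1 + 1)):] * [:1, - qp hbar (-2 * l2):] * [:1, - qp hbar (-2 * (l3 - 1)):] \<and>
     ((\<forall>k::nat. k \<ge> 1 \<longrightarrow> qp hbar (2 * of_nat k) + 1 + qp hbar (- 2 * of_nat k) \<noteq> 0) \<longrightarrow>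
       (\<forall>k::nat. k \<ge> 1 \<longrightarrow>
          Fk c1 c2 c3 k = qp hbar (-2 * (l1 + 1) * of_nat k) + qp hbar (-2 * l2 * of_nat k)
                          + qp hbar (-2 * (l3 - 1) * of_nat k)) \<and>
       Fseries hbar c1 c2 c3 =
          fps_scale (qp hbar (-2 * (l1 + 1))) (f3 hbar) + fps_scale (qp hbar (-2 * l2)) (f3 hbar)
          + fps_scale (qp hbar (-2 * (l3 - 1))) (f3 hbar))"
proof -
  interpret uq_gl3_rep hbar smul E F K
    using rep q2 by unfold_locales
  define a b c where "a = qp hbar (-2 * (l1 + 1))" and "b = qp hbar (-2 * l2)" and "c = qp hbar (-2 * (l3 - 1))"
  define c1 c2 c3 where "c1 = a + b + c" and "c2 = - (a*b + a*c + b*c)" and "c3 = a*b*c"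
  have eigen: "C1 v0 = smul c1 v0" "C2 v0 = smul c2 v0" "C3op K v0 = smul c3 v0"
    using casimirs_on_highest_weight_vector[OF K_on_weight_vector[OF wt1 wt2 wt3] hw]
    unfolding a_def b_def c_def c1_def c2_def c3_def .
  have scalar: "\<forall>w. C1 w = smul c1 w" "\<forall>w. C2 w = smul c2 w" "\<forall>w. C3op K w = smul c3 w"
    using central_acts_by_scalar[OF gen linear_casimirs(1) C1_E C1_F C1_K eigen(1)]
      central_acts_by_scalar[OF gen linear_casimirs(2) C2_E C2_F C2_K eigen(2)]
      central_acts_by_scalar[OF gen linear_casimirs(3) C3_E C3_F C3_K eigen(3)]
    by blast+
  have factorization: "[:1, - c1, - c2, - c3:] = [:1, - a:] * [:1, - b:] * [:1, - c:]"
    by (simp add: c1_def c2_def c3_def algebra_simps)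
  have power_sums: "Fk c1 c2 c3 k = a^k + b^k + c^k" if "k \<ge> 1" for k
    unfolding c1_def c2_def c3_def using Fk_of_roots[OF that] .
  show ?thesis
    using scalar factorization power_sums Fseries_of_power_sums[OF power_sums]
    unfolding a_def b_def c_def qp_mult_of_nat by blast
qed

end
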